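(* Let $G$ be a graph and let $v, w, x$ be vertices of $G$ such that $v$ is adjacent only to $w$, and $w$ is adjacent only to $v$ and $x$. If $F$ is a minimal fort of $G$ with $v, w \in F$, then $F \setminus \{v, w, x\}$ is a minimal fort of $G - \{v, w, x\}$.
   Context: A fort of a graph $G$ is a nonempty set $F\subseteq V(G)$ such that every vertex outside $F$ is adjacent to either zero or at least two vertices of $F$; it is minimal if no proper subset is a fort. *)

theory Defs
  imports Main
begin

definition graph :: "'a set \<Rightarrow> ('a \<Rightarrow> 'a \<Rightarrow> bool) \<Rightarrow> bool" where
  "graph V E \<longleftrightarrow> finite V \<and> (\<forall>u w. E u w \<longrightarrow> u \<in> V \<and> w \<in> V)
     \<and> (\<forall>u w. E u w \<longrightarrow> E w u) \<and> (\<forall>u. \<not> E u u)"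

definition neighbors :: "'a set \<Rightarrow> ('a \<Rightarrow> 'a \<Rightarrow> bool) \<Rightarrow> 'a \<Rightarrow> 'a set" where
  "neighbors V E u = {w \<in> V. E u w}"

definition fort :: "'a set \<Rightarrow> ('a \<Rightarrow> 'a \<Rightarrow> bool) \<Rightarrow> 'a set \<Rightarrow> bool" where
  "fort V E F \<longleftrightarrow> F \<noteq> {} \<and> F \<subseteq> V \<and>
     (\<forall>u \<in> V - F. card (neighbors V E u \<inter> F) = 0 \<or> card (neighbors V E u \<inter> F) \<ge> 2)"

definition minimal_fort :: "'a set \<Rightarrow> ('a \<Rightarrow> 'a \<Rightarrow> bool) \<Rightarrow> 'a set \<Rightarrow> bool" where
  "minimal_fort V E F \<longleftrightarrow> fort V E F \<and> (\<forall>F'. F' \<subset> F \<longrightarrow> \<not> fort V E F')"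

definition del_verts_V :: "'a set \<Rightarrow> 'a set \<Rightarrow> 'a set" where
  "del_verts_V V S = V - S"

definition del_verts_E :: "('a \<Rightarrow> 'a \<Rightarrow> bool) \<Rightarrow> 'a set \<Rightarrow> 'a \<Rightarrow> 'a \<Rightarrow> bool" where
  "del_verts_E E S = (\<lambda>u w. E u w \<and> u \<notin> S \<and> w \<notin> S)"

end

theory Submission
  imports Defs
begin

text \<open>
  Since v is pendant and w has degree two, no vertex outside {v, w, x} is adjacent to v or w.
  Minimality forces x \<notin> F: otherwise F - {w} would still be a fort. Hence x has the neighbour w
  in F and therefore a second one, which lies outside {v, w, x}, so F - {v, w, x} is a nonempty
  fort of the smaller graph, the neighbourhoods of the remaining vertices being unaffected.
  Conversely a fort F' of the smaller graph lifts to a fort of G: to F' itself if x has no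
  neighbour in F', and to F' \<union> {v, w} otherwise. If F' were properly contained in F - {v, w, x},
  the lifted fort would be properly contained in F.
\<close>

lemma fort_iff_no_unique_neighbor:
  "fort V E F \<longleftrightarrow> F \<noteq> {} \<and> F \<subseteq> V \<and> (\<forall>u \<in> V - F. \<not> is_singleton (neighbors V E u \<inter> F))"
proof -
  have "(card S = 0 \<or> card S \<ge> 2) \<longleftrightarrow> card S \<noteq> 1" for S :: "'a set" by auto
  then show ?thesis unfolding fort_def is_singleton_altdef by simp
qed

lemma neighbors_del_verts:
  "u \<notin> S \<Longrightarrow> neighbors (del_verts_V V S) (del_verts_E E S) u = neighbors V E u - S"
  unfolding neighbors_def del_verts_V_def del_verts_E_def by auto

lemma fort_Diff_vertex:
  assumes "graph V E" and "fort V E F" and "u \<in> F" and "neighbors V E u \<subseteq> F"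
    and "\<not> is_singleton (neighbors V E u)" and "F - {u} \<noteq> {}"
  shows "fort V E (F - {u})"
  unfolding fort_iff_no_unique_neighbor
proof (intro conjI ballI)
  show "F - {u} \<noteq> {}" by fact
  show "F - {u} \<subseteq> V" using assms(2) by (auto simp: fort_def)
  fix z assume z: "z \<in> V - (F - {u})"
  show "\<not> is_singleton (neighbors V E z \<inter> (F - {u}))"
  proof (cases "z = u")
    case True
    have "neighbors V E u \<inter> (F - {u}) = neighbors V E u"
      using assms(1,4) by (auto simp: graph_def neighbors_def)
    then show ?thesis using True assms(5) by simp
  next
    case False
    have "u \<notin> neighbors V E z"
      using assms(1,4) z False by (auto simp: graph_def neighbors_def)
    then have "neighbors V E z \<inter> (F - {u}) = neighbors V E z \<inter> F" by blast
    then show ?thesis using assms(2) z False by (simp add: fort_iff_no_unique_neighbor)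
  qed
qed

lemma fort_del_verts:
  assumes "fort V E F" and "F - S \<noteq> {}"
    and "\<And>z. z \<in> V - S \<Longrightarrow> neighbors V E z \<inter> F \<inter> S = {}"
  shows "fort (del_verts_V V S) (del_verts_E E S) (F - S)"
  unfolding fort_iff_no_unique_neighbor
proof (intro conjI ballI)
  show "F - S \<noteq> {}" by fact
  show "F - S \<subseteq> del_verts_V V S" using assms(1) by (auto simp: fort_def del_verts_V_def)
  fix z assume z: "z \<in> del_verts_V V S - (F - S)"
  then have "z \<in> V - S" "z \<notin> F" by (auto simp: del_verts_V_def)
  then have "neighbors (del_verts_V V S) (del_verts_E E S) z \<inter> (F - S) = neighbors V E z \<inter> F"
    using assms(3) by (auto simp: neighbors_del_verts)
  then show "\<not> is_singleton (neighbors (del_verts_V V S) (del_verts_E E S) z \<inter> (F - S))"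
    using assms(1) \<open>z \<in> V - S\<close> \<open>z \<notin> F\<close> by (simp add: fort_iff_no_unique_neighbor)
qed

lemma fort_of_fort_del_verts:
  assumes "fort (del_verts_V V S) (del_verts_E E S) F" and "T \<subseteq> S \<inter> V"
    and "\<And>z. z \<in> V - S \<Longrightarrow> neighbors V E z \<inter> T = {}"
    and "\<And>s. s \<in> V \<inter> S - T \<Longrightarrow> \<not> is_singleton (neighbors V E s \<inter> (F \<union> T))"
  shows "fort V E (F \<union> T)"
  unfolding fort_iff_no_unique_neighbor
proof (intro conjI ballI)
  have F: "F \<noteq> {}" "F \<subseteq> V - S"
    using assms(1) by (auto simp: fort_def del_verts_V_def)
  then show "F \<union> T \<noteq> {}" "F \<union> T \<subseteq> V" using assms(2) by auto
  fix z assume z: "z \<in> V - (F \<union> T)"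
  show "\<not> is_singleton (neighbors V E z \<inter> (F \<union> T))"
  proof (cases "z \<in> S")
    case True
    then show ?thesis using z assms(4) by blast
  next
    case False
    then have "neighbors V E z \<inter> (F \<union> T)
        = neighbors (del_verts_V V S) (del_verts_E E S) z \<inter> F"
      using z F(2) assms(3) by (auto simp: neighbors_del_verts)
    moreover have "z \<in> del_verts_V V S - F" using z False by (simp add: del_verts_V_def)
    ultimately show ?thesis using assms(1) by (simp add: fort_iff_no_unique_neighbor)
  qed
qed

locale pendant_path =
  fixes V :: "'a set" and E :: "'a \<Rightarrow> 'a \<Rightarrow> bool" and v w x :: 'a
  assumes graph: "graph V E"
    and in_V: "v \<in> V" "w \<in> V" "x \<in> V"
    and x_neq_v: "x \<noteq> v"
    and neighbors_v: "neighbors V E v = {w}"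
    and neighbors_w: "neighbors V E w = {v, x}"
begin

lemma distinct_path: "v \<noteq> w" "w \<noteq> x"
  using graph neighbors_v neighbors_w by (auto simp: graph_def neighbors_def)

lemma w_in_neighbors_x: "w \<in> neighbors V E x"
proof -
  have "E w x" using neighbors_w by (auto simp: neighbors_def)
  then show ?thesis using graph in_V by (auto simp: graph_def neighbors_def)
qed

lemma neighbors_outside_path:
  assumes "z \<in> V - {v, w, x}"
  shows "neighbors V E z \<inter> {v, w} = {}"
proof -
  have "E v z \<Longrightarrow> z = w" "E w z \<Longrightarrow> z \<in> {v, x}"
    using neighbors_v neighbors_w graph by (auto simp: graph_def neighbors_def)
  then show ?thesis using assms graph by (auto simp: graph_def neighbors_def)
qed

lemma x_notin_minimal_fort:
  assumes "minimal_fort V E F" and "v \<in> F" and "w \<in> F"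
  shows "x \<notin> F"
proof
  assume "x \<in> F"
  have "fort V E (F - {w})"
  proof (rule fort_Diff_vertex)
    show "neighbors V E w \<subseteq> F" using neighbors_w assms(2) \<open>x \<in> F\<close> by simp
    show "\<not> is_singleton (neighbors V E w)"
      using neighbors_w x_neq_v by (auto simp: is_singleton_def doubleton_eq_iff)
    show "F - {w} \<noteq> {}" using assms(2) distinct_path by blast
  qed (use graph assms in \<open>auto simp: minimal_fort_def\<close>)
  then show False using assms(1,3) by (auto simp: minimal_fort_def)
qed

lemma fort_del_path:
  assumes "fort V E F" and "v \<in> F" and "w \<in> F" and "x \<notin> F"
  shows "fort (del_verts_V V {v, w, x}) (del_verts_E E {v, w, x}) (F - {v, w, x})"
proof (rule fort_del_verts)
  have "neighbors V E x \<inter> F \<noteq> {w}"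
    using assms(1,4) in_V(3) unfolding fort_iff_no_unique_neighbor is_singleton_def by blast
  moreover have "w \<in> neighbors V E x \<inter> F" using w_in_neighbors_x assms(3) by blast
  ultimately obtain y where y: "y \<in> neighbors V E x \<inter> F" "y \<noteq> w" by blast
  have "y \<noteq> v"
    using y neighbors_v distinct_path graph by (auto simp: graph_def neighbors_def)
  then show "F - {v, w, x} \<noteq> {}" using y assms(4) by blast
next
  show "neighbors V E z \<inter> F \<inter> {v, w, x} = {}" if "z \<in> V - {v, w, x}" for z
    using neighbors_outside_path[OF that] assms(4) by blast
qed (fact assms)

lemma fort_lift_from_del_path:
  assumes "fort (del_verts_V V {v, w, x}) (del_verts_E E {v, w, x}) F"
  shows "fort V E F \<or> fort V E (F \<union> {v, w})"
proof (cases "neighbors V E x \<inter> F = {}")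
  case True
  have "F \<inter> {v, w, x} = {}"
    using assms by (auto simp: fort_def del_verts_V_def)
  then have "fort V E (F \<union> {})"
    using True neighbors_v neighbors_w
    by (intro fort_of_fort_del_verts[OF assms]) (auto simp: is_singleton_def)
  then show ?thesis by simp
next
  case False
  then obtain y where y: "y \<in> neighbors V E x" "y \<in> F" by blast
  have "y \<noteq> w"
    using y assms by (auto simp: fort_def del_verts_V_def)
  have "y \<in> neighbors V E x \<inter> (F \<union> {v, w})" "w \<in> neighbors V E x \<inter> (F \<union> {v, w})"
    using y w_in_neighbors_x by auto
  then have "\<not> is_singleton (neighbors V E x \<inter> (F \<union> {v, w}))"
    using \<open>y \<noteq> w\<close> unfolding is_singleton_def by (metis singletonD)
  then have "fort V E (F \<union> {v, w})"
    using in_V neighbors_outside_path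
    by (intro fort_of_fort_del_verts[OF assms]) auto
  then show ?thesis by simp
qed

end

theorem mainTheorem11:
  fixes V :: "'a set" and E :: "'a \<Rightarrow> 'a \<Rightarrow> bool" and v w x :: 'a and F :: "'a set"
  assumes "graph V E"
    and "v \<in> V" and "w \<in> V" and "x \<in> V" and "x \<noteq> v"
    and "neighbors V E v = {w}"
    and "neighbors V E w = {v, x}"
    and "minimal_fort V E F" and "v \<in> F" and "w \<in> F"
  shows "minimal_fort (del_verts_V V {v, w, x}) (del_verts_E E {v, w, x}) (F - {v, w, x})"
proof -
  interpret pendant_path V E v w x
    using assms(1-7) by unfold_locales
  have "x \<notin> F" using x_notin_minimal_fort assms(8-10) .
  have "\<not> fort (del_verts_V V {v, w, x}) (del_verts_E E {v, w, x}) F'"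
    if "F' \<subset> F - {v, w, x}" for F'
  proof
    assume "fort (del_verts_V V {v, w, x}) (del_verts_E E {v, w, x}) F'"
    then have "fort V E F' \<or> fort V E (F' \<union> {v, w})" by (rule fort_lift_from_del_path)
    moreover have "F' \<subset> F" "F' \<union> {v, w} \<subset> F" using that assms(9,10) by auto
    ultimately show False using assms(8) by (auto simp: minimal_fort_def)
  qed
  with fort_del_path show ?thesis
    using assms(8-10) \<open>x \<notin> F\<close> by (auto simp: minimal_fort_def)
qed

end
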